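(* Let $S(A)=(a_n)$ be a regular Stanley sequence with shift index $\sigma=\sigma(A)$ and core $(a'_n)$, and let $\alpha$ be the constant such that $a'_{2^k}=\alpha\cdot 3^k$ for all large $k$ (such $\alpha$ exists since the core is independent). Then there exists a constant $\beta$ such that $a_{2^k-\sigma}=\alpha\cdot 3^k+\beta\cdot 2^k$ for all sufficiently large $k$.
   Context: A set of non-negative integers is 3-free if no three of its elements form an arithmetic progression. For a finite 3-free set $A=\{a_0<\cdots<a_k\}$ of non-negative integers, the Stanley sequence $S(A)=(a_n)_{n\ge0}$ is the increasing sequence with initial terms $a_0,\ldots,a_k$ in which each subsequent $a_{n+1}$ is the smallest integer greater than $a_n$ such that $\{a_0,\ldots,a_{n+1}\}$ is 3-free. Throughout, Stanley sequences are in root position ($a_0=0$). A Stanley sequence $(a_n)$ is independent with character $\lambda$ if for all sufficiently large $k$: $a_{2^k+i}=a_{2^k}+a_i$ for $0\le i<2^k$, and $a_{2^k}=2a_{2^k-1}-\lambda+1$. A Stanley sequence $(a_n)$ is regular if there exist constants $\lambda,\sigma$ and an independent Stanley sequence $(a'_n)$ of character $\lambda$ such that for all large $k$ and $0\le i<2^k$: $a_{2^k-\sigma+i}=a_{2^k-\sigma}+a'_i$ and $a_{2^k-\sigma}=2a_{2^k-\sigma-1}-\lambda+1$; these data are unique, and $\sigma$ is called the shift index and $(a'_n)$ the core. *)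

theory Defs
  imports Complex_Main
begin

definition three_free :: "nat set \<Rightarrow> bool" where
  "three_free S \<longleftrightarrow> (\<forall>x\<in>S. \<forall>y\<in>S. \<forall>z\<in>S. x < y \<and> y < z \<longrightarrow> x + z \<noteq> 2 * y)"

definition stanley_seq_of :: "nat set \<Rightarrow> (nat \<Rightarrow> nat) \<Rightarrow> bool" where
  "stanley_seq_of A a \<longleftrightarrow>
     finite A \<and> three_free A \<and> 0 \<in> A \<and> strict_mono a \<and>
     a ` {0..<card A} = A \<and>
     (\<forall>n. n + 1 \<ge> card A \<longrightarrow>
        a (Suc n) = (LEAST x. x > a n \<and> three_free (a ` {0..n} \<union> {x})))"

definition stanley_seq :: "(nat \<Rightarrow> nat) \<Rightarrow> bool" where
  "stanley_seq a \<longleftrightarrow> (\<exists>A. stanley_seq_of A a)"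

definition independent_char :: "(nat \<Rightarrow> nat) \<Rightarrow> int \<Rightarrow> bool" where
  "independent_char a lam \<longleftrightarrow> stanley_seq a \<and>
     (\<exists>K. \<forall>k\<ge>K. (\<forall>i<2^k. a (2^k + i) = a (2^k) + a i) \<and>
                 int (a (2^k)) = 2 * int (a (2^k - 1)) - lam + 1)"

definition regular_data :: "(nat \<Rightarrow> nat) \<Rightarrow> int \<Rightarrow> int \<Rightarrow> (nat \<Rightarrow> nat) \<Rightarrow> bool" where
  "regular_data a lam \<sigma> a' \<longleftrightarrow> stanley_seq a \<and> independent_char a' lam \<and>
     (\<exists>K. \<forall>k\<ge>K. 2^k - \<sigma> \<ge> 1 \<and>
        (\<forall>i<2^k. a (nat (2^k - \<sigma>) + i) = a (nat (2^k - \<sigma>)) + a' i) \<and>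
        int (a (nat (2^k - \<sigma>))) = 2 * int (a (nat (2^k - \<sigma> - 1))) - lam + 1)"

definition regular_stanley :: "(nat \<Rightarrow> nat) \<Rightarrow> bool" where
  "regular_stanley a \<longleftrightarrow> (\<exists>lam \<sigma> a'. regular_data a lam \<sigma> a')"

end

theory Submission
  imports Defs
begin

text \<open>Splitting the block of length \<open>2^(k+1)\<close> ending at \<open>2^(k+1) - \<sigma> - 1\<close> at the start
  \<open>2^k - \<sigma>\<close> of its second half and comparing with the last core term \<open>a'(2^k - 1)\<close> shows
  \<open>a(2^(k+1) - \<sigma>) = 2 a(2^k - \<sigma>) + a'(2^k)\<close>: the character \<open>\<lambda>\<close> cancels between the two
  doubling relations. Solving this first-order linear recurrence with \<open>a'(2^k) = \<alpha> 3^k\<close>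
  gives \<open>\<alpha> 3^k\<close> as a particular solution and \<open>\<beta> 2^k\<close> as the general homogeneous one.\<close>

lemma linear_recurrence_closed_form:
  fixes b :: "nat \<Rightarrow> 'a::field"
  assumes "c \<noteq> 0" "d \<noteq> c"
    and "\<forall>\<^sub>F k in sequentially. b (Suc k) = c * b k + \<gamma> * d ^ k"
  shows "\<exists>\<beta>. \<forall>\<^sub>F k in sequentially. b k = \<gamma> / (d - c) * d ^ k + \<beta> * c ^ k"
proof -
  from assms(3) obtain K where rec: "\<And>k. k \<ge> K \<Longrightarrow> b (Suc k) = c * b k + \<gamma> * d ^ k"
    by (auto simp: eventually_sequentially)
  define e where "e k = b k - \<gamma> / (d - c) * d ^ k" for k
  have e_Suc: "e (Suc k) = c * e k" if "k \<ge> K" for k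
    using rec[OF that] assms(2) by (simp add: e_def field_simps)
  have e_iter: "e (K + n) = c ^ n * e K" for n
    by (induction n) (simp_all add: e_Suc)
  have "b k = \<gamma> / (d - c) * d ^ k + e K / c ^ K * c ^ k" if "k \<ge> K" for k
  proof -
    from that obtain n where "k = K + n" using le_Suc_ex by blast
    then have "e k = e K / c ^ K * c ^ k"
      using e_iter[of n] assms(1) by (simp add: power_add)
    then show ?thesis by (simp add: e_def diff_eq_eq)
  qed
  then show ?thesis
    by (intro exI[of _ "e K / c ^ K"]) (auto simp: eventually_sequentially)
qed

lemma nat_shifted_power_of_two_index:
  fixes \<sigma> :: int
  assumes "2 ^ k - \<sigma> \<ge> 1"
  shows "nat (2 ^ k - \<sigma>) + (2 ^ k - 1) = nat (2 ^ Suc k - \<sigma> - 1)"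
proof -
  have "int (nat (2 ^ k - \<sigma>) + (2 ^ k - 1)) = 2 ^ Suc k - \<sigma> - 1"
    using assms by (simp add: of_nat_diff)
  then show ?thesis by linarith
qed

lemma regular_shift_term_recurrence:
  assumes "regular_data a lam \<sigma> a'"
  shows "\<forall>\<^sub>F k in sequentially.
    a (nat (2 ^ Suc k - \<sigma>)) = 2 * a (nat (2 ^ k - \<sigma>)) + a' (2 ^ k)"
proof -
  from assms obtain K1 where K1: "\<And>k. k \<ge> K1 \<Longrightarrow> 2^k - \<sigma> \<ge> 1 \<and>
        (\<forall>i<2^k. a (nat (2^k - \<sigma>) + i) = a (nat (2^k - \<sigma>)) + a' i) \<and>
        int (a (nat (2^k - \<sigma>))) = 2 * int (a (nat (2^k - \<sigma> - 1))) - lam + 1"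
    and "independent_char a' lam"
    unfolding regular_data_def by blast
  then obtain K2 where K2: "\<And>k. k \<ge> K2 \<Longrightarrow> int (a' (2^k)) = 2 * int (a' (2^k - 1)) - lam + 1"
    unfolding independent_char_def by blast
  have "a (nat (2 ^ Suc k - \<sigma>)) = 2 * a (nat (2 ^ k - \<sigma>)) + a' (2 ^ k)"
    if "k \<ge> max K1 K2" for k
  proof -
    from that K1[of k] have start: "2^k - \<sigma> \<ge> 1"
      and block: "\<forall>i<2^k. a (nat (2^k - \<sigma>) + i) = a (nat (2^k - \<sigma>)) + a' i"
      by auto
    have "a (nat (2^k - \<sigma>) + (2^k - 1)) = a (nat (2^k - \<sigma>)) + a' (2^k - 1)"
      using block[rule_format, of "2^k - 1"] by simp
    then have "a (nat (2^Suc k - \<sigma> - 1)) = a (nat (2^k - \<sigma>)) + a' (2^k - 1)"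
      by (simp only: nat_shifted_power_of_two_index[OF start])
    moreover have "int (a (nat (2^Suc k - \<sigma>))) = 2 * int (a (nat (2^Suc k - \<sigma> - 1))) - lam + 1"
      using that K1[of "Suc k"] by auto
    moreover have "int (a' (2^k)) = 2 * int (a' (2^k - 1)) - lam + 1"
      using that K2 by auto
    ultimately show ?thesis by simp
  qed
  then show ?thesis
    unfolding eventually_sequentially by blast
qed

theorem mainTheorem8:
  fixes a a' :: "nat \<Rightarrow> nat" and lam \<sigma> :: int and \<alpha> :: real
  assumes "regular_data a lam \<sigma> a'"
    and "\<exists>K. \<forall>k\<ge>K. real (a' (2^k)) = \<alpha> * 3^k"
  shows "\<exists>\<beta>::real. \<exists>K. \<forall>k\<ge>K. real (a (nat (2^k - \<sigma>))) = \<alpha> * 3^k + \<beta> * 2^k"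
proof -
  have "\<forall>\<^sub>F k in sequentially. real (a' (2^k)) = \<alpha> * 3^k"
    using assms(2) by (simp add: eventually_sequentially)
  with regular_shift_term_recurrence[OF assms(1)]
  have "\<forall>\<^sub>F k in sequentially.
      real (a (nat (2 ^ Suc k - \<sigma>))) = 2 * real (a (nat (2 ^ k - \<sigma>))) + \<alpha> * 3 ^ k"
    by eventually_elim simp
  from linear_recurrence_closed_form[OF _ _ this]
  obtain \<beta> where "\<forall>\<^sub>F k in sequentially. real (a (nat (2^k - \<sigma>))) = \<alpha> * 3^k + \<beta> * 2^k"
    by auto
  then show ?thesis by (auto simp: eventually_sequentially)
qed

end
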